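(* Assume that the optimizer $x^*$ of the DC-OPF problem satisfies $x^*_n>0$ for all $n\in\{1,\dots,N\}$. Then there exists a unique efficient bid $b^*\in\mathbb R^N_{\ge0}$, given by $b^*_n=\nabla f_n(x^*_n)=2a_nx^*_n+c_n$ for all $n$.
   Context: Network: a directed graph $\mathcal G=(\mathcal V,\mathcal E)$ with buses $\mathcal V=\{1,\dots,N_b\}$ and power lines $\mathcal E$; $\mathcal N_i^+=\{j:(i,j)\in\mathcal E\}$, $\mathcal N_i^-=\{j:(j,i)\in\mathcal E\}$. Each line $(i,j)$ carries flow $z_{ij}\in\mathbb R$ with limit $\bar z_{ij}>0$. There are $N$ generators labelled $1,\dots,N$; $G_i$ is the (possibly empty) set of generators at bus $i$, the $G_i$ partition $\{1,\dots,N\}$. Bus $i$ has load $y_i\ge0$. Generator $n$ has cost $f_n(x)=a_nx^2+c_nx$ with $a_n>0$, $c_n\ge 0$. DC-OPF: minimize $\sum_{n=1}^N f_n(x_n)$ over $(x,z)$ subject to $\sum_{j\in\mathcal N_i^+}z_{ij}-\sum_{j\in\mathcal N_i^-}z_{ji}=\sum_{n\in G_i}x_n-y_i$ for all buses $i$, $-\bar z_{ij}\le z_{ij}\le\bar z_{ij}$ for all $(i,j)\in\mathcal E$, and $x\ge 0$; assumed feasible, with optimizer $(x^*,z^* )$, $x^*$ unique. S-DC-OPF given bids $b\in\mathbb R^N_{\ge0}$: same constraints, objective $\sum_n b_nx_n$. Efficient bid: $b^*\ge0$ such that $(x^*,z^* )$ is an optimizer of S-DC-OPF with bids $b^*$ and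 $x^*_n=\arg\max_{x\ge0}(b^*_nx-f_n(x))$ for all $n$. *)

theory Defs
  imports Complex_Main
begin

text \<open>Buses are the elements of a finite type 'v, generators the elements of a finite
  type 'g. The set of lines is E (pairs (i,j) of buses). loc n is the bus at which
  generator n sits, so G_i = {n. loc n = i}; these sets partition the generators.
  Flows z are functions on pairs of buses (only values on E matter).\<close>

definition gen_cost :: "real \<Rightarrow> real \<Rightarrow> real \<Rightarrow> real" where
  "gen_cost a c x = a * x^2 + c * x"

definition dcopf_feasible ::
  "('v::finite \<times> 'v) set \<Rightarrow> ('v \<times> 'v \<Rightarrow> real) \<Rightarrow> ('g::finite \<Rightarrow> 'v) \<Rightarrow> ('v \<Rightarrow> real)
   \<Rightarrow> ('g \<Rightarrow> real) \<Rightarrow> ('v \<times> 'v \<Rightarrow> real) \<Rightarrow> bool" where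
  "dcopf_feasible E zbar loc y x z \<longleftrightarrow>
     (\<forall>i. (\<Sum>j\<in>{j. (i,j) \<in> E}. z (i,j)) - (\<Sum>j\<in>{j. (j,i) \<in> E}. z (j,i))
           = (\<Sum>n\<in>{n. loc n = i}. x n) - y i) \<and>
     (\<forall>e\<in>E. - zbar e \<le> z e \<and> z e \<le> zbar e) \<and>
     (\<forall>n. 0 \<le> x n)"

definition dcopf_optimal where
  "dcopf_optimal E zbar loc y a c x z \<longleftrightarrow>
     dcopf_feasible E zbar loc y x z \<and>
     (\<forall>x' z'. dcopf_feasible E zbar loc y x' z' \<longrightarrow>
        (\<Sum>n\<in>UNIV. gen_cost (a n) (c n) (x n)) \<le> (\<Sum>n\<in>UNIV. gen_cost (a n) (c n) (x' n)))"

definition sdcopf_optimal where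
  "sdcopf_optimal E zbar loc y b x z \<longleftrightarrow>
     dcopf_feasible E zbar loc y x z \<and>
     (\<forall>x' z'. dcopf_feasible E zbar loc y x' z' \<longrightarrow>
        (\<Sum>n\<in>UNIV. b n * x n) \<le> (\<Sum>n\<in>UNIV. b n * x' n))"

definition efficient_bid where
  "efficient_bid E zbar loc y a c xs zs b \<longleftrightarrow>
     (\<forall>n. 0 \<le> b n) \<and>
     sdcopf_optimal E zbar loc y b xs zs \<and>
     (\<forall>n. is_arg_max (\<lambda>x. b n * x - gen_cost (a n) (c n) x) (\<lambda>x. 0 \<le> x) (xs n))"

end

theory Submission
  imports Defs
begin

text \<open>The feasible set of DC-OPF is convex and the total cost is a separable convex quadratic.
  Moving from the optimizer x* towards any feasible x' by a step t changes the cost by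
  t D + t^2 Q with D = sum_n (2 a_n x*_n + c_n)(x'_n - x*_n); optimality for all small t > 0
  forces D \<ge> 0, i.e. x* is optimal for the linear objective with bids 2 a_n x*_n + c_n.
  Conversely, since x*_n is interior, the profit b_n x - f_n(x) is maximized there only if
  its derivative b_n - f_n'(x*_n) vanishes, which pins the bid down uniquely.\<close>

lemma dcopf_feasible_convex:
  assumes feas: "dcopf_feasible E zbar loc y x z" and feas': "dcopf_feasible E zbar loc y x' z'"
    and t: "0 \<le> t" "t \<le> 1"
  shows "dcopf_feasible E zbar loc y (\<lambda>n. (1-t) * x n + t * x' n) (\<lambda>e. (1-t) * z e + t * z' e)"
  unfolding dcopf_feasible_def
proof (intro conjI allI ballI)
  fix i
  let ?out = "{j. (i,j) \<in> E}" and ?inc = "{j. (j,i) \<in> E}" and ?gen = "{n. loc n = i}"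
  have balance: "(\<Sum>j\<in>?out. z (i,j)) - (\<Sum>j\<in>?inc. z (j,i)) = (\<Sum>n\<in>?gen. x n) - y i"
    and balance': "(\<Sum>j\<in>?out. z' (i,j)) - (\<Sum>j\<in>?inc. z' (j,i)) = (\<Sum>n\<in>?gen. x' n) - y i"
    using feas feas' unfolding dcopf_feasible_def by blast+
  have "(\<Sum>j\<in>?out. (1-t) * z (i,j) + t * z' (i,j)) - (\<Sum>j\<in>?inc. (1-t) * z (j,i) + t * z' (j,i))
      = (1-t) * ((\<Sum>j\<in>?out. z (i,j)) - (\<Sum>j\<in>?inc. z (j,i)))
        + t * ((\<Sum>j\<in>?out. z' (i,j)) - (\<Sum>j\<in>?inc. z' (j,i)))"
    unfolding sum.distrib sum_distrib_left[symmetric] by (simp add: algebra_simps)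
  also have "\<dots> = (1-t) * ((\<Sum>n\<in>?gen. x n) - y i) + t * ((\<Sum>n\<in>?gen. x' n) - y i)"
    by (simp only: balance balance')
  also have "\<dots> = (\<Sum>n\<in>?gen. (1-t) * x n + t * x' n) - y i"
    unfolding sum.distrib sum_distrib_left[symmetric] by (simp add: algebra_simps)
  finally show "(\<Sum>j\<in>?out. (1-t) * z (i,j) + t * z' (i,j)) - (\<Sum>j\<in>?inc. (1-t) * z (j,i) + t * z' (j,i))
      = (\<Sum>n\<in>?gen. (1-t) * x n + t * x' n) - y i" .
next
  fix e assume "e \<in> E"
  then have bounds: "- zbar e \<le> z e" "z e \<le> zbar e" "- zbar e \<le> z' e" "z' e \<le> zbar e"
    using feas feas' unfolding dcopf_feasible_def by auto
  have "0 \<le> 1 - t"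
    using t by simp
  note scaled = mult_left_mono[OF bounds(1) this] mult_left_mono[OF bounds(2) this]
    mult_left_mono[OF bounds(3) t(1)] mult_left_mono[OF bounds(4) t(1)]
  from scaled show "- zbar e \<le> (1-t) * z e + t * z' e" "(1-t) * z e + t * z' e \<le> zbar e"
    by (auto simp: algebra_simps)
next
  fix n
  show "0 \<le> (1-t) * x n + t * x' n"
    using feas feas' t unfolding dcopf_feasible_def by simp
qed

lemma gen_cost_shift:
  "gen_cost a c (u + h) = gen_cost a c u + (2 * a * u + c) * h + a * h\<^sup>2"
  unfolding gen_cost_def by (simp add: power2_eq_square algebra_simps)

lemma nonneg_of_nonneg_near_zero:
  fixes D Q s :: real
  assumes "0 < s" and nonneg: "\<And>t. 0 < t \<Longrightarrow> t \<le> s \<Longrightarrow> 0 \<le> t * D + t\<^sup>2 * Q"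
  shows "0 \<le> D"
proof (rule ccontr)
  assume "\<not> 0 \<le> D"
  then have D: "D < 0" by simp
  define t where "t = min s (- D / (2 * \<bar>Q\<bar> + 1))"
  have "0 < - D / (2 * \<bar>Q\<bar> + 1)"
    using D by (intro divide_pos_pos) auto
  then have t: "0 < t" "t \<le> s"
    using \<open>0 < s\<close> by (auto simp: t_def)
  have "t * \<bar>Q\<bar> \<le> (- D / (2 * \<bar>Q\<bar> + 1)) * \<bar>Q\<bar>"
    by (intro mult_right_mono) (auto simp: t_def)
  also have "\<dots> \<le> - D / 2"
    using D by (simp add: field_simps)
  moreover have "t * Q \<le> t * \<bar>Q\<bar>"
    using t(1) by (simp add: mult_left_mono)
  ultimately have "D + t * Q < 0"
    using D by linarith
  then have "t * (D + t * Q) < 0"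
    using t(1) by (simp add: mult_pos_neg)
  with nonneg[OF t] show False
    by (simp add: power2_eq_square algebra_simps)
qed

lemma sdcopf_optimal_marginal_cost_bids:
  assumes opt: "dcopf_optimal E zbar loc y a c xs zs"
  shows "sdcopf_optimal E zbar loc y (\<lambda>n. 2 * a n * xs n + c n) xs zs"
  unfolding sdcopf_optimal_def
proof (intro conjI allI impI)
  let ?b = "\<lambda>n. 2 * a n * xs n + c n"
  show feas: "dcopf_feasible E zbar loc y xs zs"
    using opt unfolding dcopf_optimal_def by simp
  fix x' z' assume feas': "dcopf_feasible E zbar loc y x' z'"
  define D where "D = (\<Sum>n\<in>UNIV. ?b n * (x' n - xs n))"
  define Q where "Q = (\<Sum>n\<in>UNIV. a n * (x' n - xs n)\<^sup>2)"
  have "0 \<le> t * D + t\<^sup>2 * Q" if t: "0 < t" "t \<le> 1" for t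
  proof -
    let ?xt = "\<lambda>n. (1-t) * xs n + t * x' n"
    have "dcopf_feasible E zbar loc y ?xt (\<lambda>e. (1-t) * zs e + t * z' e)"
      using dcopf_feasible_convex[OF feas feas'] t by simp
    then have "(\<Sum>n\<in>UNIV. gen_cost (a n) (c n) (xs n)) \<le> (\<Sum>n\<in>UNIV. gen_cost (a n) (c n) (?xt n))"
      using opt unfolding dcopf_optimal_def by blast
    also have "\<dots> = (\<Sum>n\<in>UNIV. gen_cost (a n) (c n) (xs n)) + (t * D + t\<^sup>2 * Q)"
    proof -
      have step: "gen_cost (a n) (c n) (?xt n) = gen_cost (a n) (c n) (xs n)
          + t * (?b n * (x' n - xs n)) + t\<^sup>2 * (a n * (x' n - xs n)\<^sup>2)" for n
      proof -
        have "?xt n = xs n + t * (x' n - xs n)"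
          by (simp add: algebra_simps)
        then show ?thesis
          by (simp only: gen_cost_shift) (simp add: power_mult_distrib ac_simps)
      qed
      show ?thesis
        by (simp add: step D_def Q_def sum.distrib sum_distrib_left)
    qed
    finally show ?thesis by simp
  qed
  then have "0 \<le> D"
    by (rule nonneg_of_nonneg_near_zero[where s = 1 and Q = Q, OF zero_less_one])
  then show "(\<Sum>n\<in>UNIV. ?b n * xs n) \<le> (\<Sum>n\<in>UNIV. ?b n * x' n)"
    unfolding D_def by (simp add: right_diff_distrib sum_subtractf)
qed

lemma is_arg_max_profit_iff:
  fixes a b c u :: real
  assumes "0 < a" and "0 < u"
  shows "is_arg_max (\<lambda>x. b * x - gen_cost a c x) (\<lambda>x. 0 \<le> x) u \<longleftrightarrow> b = 2 * a * u + c"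
proof -
  define d where "d = b - (2 * a * u + c)"
  have profit_shift: "b * (u + h) - gen_cost a c (u + h) = b * u - gen_cost a c u + (h * d - a * h\<^sup>2)"
    for h
    unfolding gen_cost_shift d_def by (simp add: algebra_simps)
  have "is_arg_max (\<lambda>x. b * x - gen_cost a c x) (\<lambda>x. 0 \<le> x) u
      \<longleftrightarrow> (\<forall>h. 0 \<le> u + h \<longrightarrow> h * d - a * h\<^sup>2 \<le> 0)"
  proof
    assume "is_arg_max (\<lambda>x. b * x - gen_cost a c x) (\<lambda>x. 0 \<le> x) u"
    then have "b * x - gen_cost a c x \<le> b * u - gen_cost a c u" if "0 \<le> x" for x
      using that unfolding is_arg_max_linorder by blast
    from this[of "u + h" for h] show "\<forall>h. 0 \<le> u + h \<longrightarrow> h * d - a * h\<^sup>2 \<le> 0"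
      unfolding profit_shift by simp
  next
    assume max: "\<forall>h. 0 \<le> u + h \<longrightarrow> h * d - a * h\<^sup>2 \<le> 0"
    have "b * x - gen_cost a c x \<le> b * u - gen_cost a c u" if "0 \<le> x" for x
      using max[rule_format, of "x - u"] profit_shift[of "x - u"] that by simp
    then show "is_arg_max (\<lambda>x. b * x - gen_cost a c x) (\<lambda>x. 0 \<le> x) u"
      unfolding is_arg_max_linorder using \<open>0 < u\<close> by simp
  qed
  also have "\<dots> \<longleftrightarrow> d = 0"
  proof
    assume max: "\<forall>h. 0 \<le> u + h \<longrightarrow> h * d - a * h\<^sup>2 \<le> 0"
    have "0 \<le> - d"
    proof (rule nonneg_of_nonneg_near_zero[where s = 1 and Q = a])
      fix t :: real assume "0 < t" "t \<le> 1"
      then have "t * d - a * t\<^sup>2 \<le> 0"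
        using max[rule_format, of t] \<open>0 < u\<close> by simp
      then show "0 \<le> t * - d + t\<^sup>2 * a"
        by (simp add: algebra_simps)
    qed simp
    moreover have "0 \<le> d"
    proof (rule nonneg_of_nonneg_near_zero[where s = u and Q = a])
      fix t :: real assume "0 < t" "t \<le> u"
      then have "- t * d - a * (- t)\<^sup>2 \<le> 0"
        using max[rule_format, of "- t"] by simp
      then show "0 \<le> t * d + t\<^sup>2 * a"
        by (simp add: algebra_simps)
    qed (rule \<open>0 < u\<close>)
    ultimately show "d = 0" by simp
  next
    assume "d = 0"
    then show "\<forall>h. 0 \<le> u + h \<longrightarrow> h * d - a * h\<^sup>2 \<le> 0"
      using \<open>0 < a\<close> by simp
  qed
  finally show ?thesis
    unfolding d_def by simp
qed

theorem lemma3p2: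
  fixes E :: "('v::finite \<times> 'v) set"
    and zbar :: "'v \<times> 'v \<Rightarrow> real"
    and loc :: "'g::finite \<Rightarrow> 'v"
    and y :: "'v \<Rightarrow> real"
    and a c :: "'g \<Rightarrow> real"
    and xs :: "'g \<Rightarrow> real"
    and zs :: "'v \<times> 'v \<Rightarrow> real"
  assumes zbar_pos: "\<forall>e\<in>E. 0 < zbar e"
    and y_nonneg: "\<forall>i. 0 \<le> y i"
    and a_pos: "\<forall>n. 0 < a n"
    and c_nonneg: "\<forall>n. 0 \<le> c n"
    and opt: "dcopf_optimal E zbar loc y a c xs zs"
    and xs_unique: "\<forall>x' z'. dcopf_optimal E zbar loc y a c x' z' \<longrightarrow> x' = xs"
    and xs_pos: "\<forall>n. 0 < xs n"
  shows "(\<exists>!b. efficient_bid E zbar loc y a c xs zs b)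
    \<and> efficient_bid E zbar loc y a c xs zs (\<lambda>n. 2 * a n * xs n + c n)"
proof -
  let ?b = "\<lambda>n. 2 * a n * xs n + c n"
  have profit_max: "is_arg_max (\<lambda>x. b n * x - gen_cost (a n) (c n) x) (\<lambda>x. 0 \<le> x) (xs n)
      \<longleftrightarrow> b n = ?b n" for b n
    using is_arg_max_profit_iff a_pos xs_pos by blast
  have "0 \<le> ?b n" for n
    using a_pos[rule_format, of n] c_nonneg xs_pos[rule_format, of n] by simp
  then have eff: "efficient_bid E zbar loc y a c xs zs ?b"
    unfolding efficient_bid_def
    using profit_max[of ?b] sdcopf_optimal_marginal_cost_bids[OF opt] by simp
  have "b = ?b" if "efficient_bid E zbar loc y a c xs zs b" for b
    using that profit_max unfolding efficient_bid_def by blast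
  with eff show ?thesis by blast
qed

end
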